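(* For all integers $a, b \ge 2$, $R_\mathrm{cyc}(C_a^\mathrm{mon}, C_b^\mathrm{mon}) = 2ab - 3a - 3b + 6$.
   Context: All graphs are finite, simple and undirected, and a graph of order $n$ has vertex set $\{0,1,\ldots,n-1\}$; $K_n$ is the complete graph on $\{0,\ldots,n-1\}$. A $2$-edge-coloring of $K_n$ assigns each edge a color in $\{1,2\}$. An embedding of $H$ in color $j$ is an injective map $\varphi\colon V(H)\to V(K_n)$ such that every edge $uv$ of $H$ goes to an edge $\{\varphi(u),\varphi(v)\}$ of color $j$; it is increasing up to a cyclic permutation if there exists $t\in V(H)$ such that $(\varphi(t),\ldots,\varphi(|H|-1),\varphi(0),\ldots,\varphi(t-1))$ is increasing. $R_\mathrm{cyc}(H_1,H_2)$ is the smallest $n$ such that every $2$-edge-coloring of $K_n$ admits an embedding of $H_1$ in color $1$ or of $H_2$ in color $2$ that is increasing up to a cyclic permutation. For $n\ge3$ the monotone cycle $C_n^\mathrm{mon}$ has edges $\{i,i+1\}$ ($0\le i\le n-2$) and $\{0,n-1\}$; by convention $C_2^\mathrm{mon}=K_2$. *)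

theory Defs
  imports Main
begin

text \<open>A graph of order k: vertex set {0..<k}, edges are 2-element subsets of it.\<close>
type_synonym graph = "nat \<times> nat set set"

definition order :: "graph \<Rightarrow> nat" where "order H = fst H"
definition edges :: "graph \<Rightarrow> nat set set" where "edges H = snd H"

text \<open>Monotone cycle C_n^mon (n \<ge> 3); by convention C_2^mon = K_2.\<close>
definition C_mon :: "nat \<Rightarrow> graph" where
  "C_mon n = (if n = 2 then (2, {{0, 1}})
              else (n, {{i, i + 1} | i. i + 2 \<le> n} \<union> {{0, n - 1}}))"

definition Kedges :: "nat \<Rightarrow> nat set set" where
  "Kedges n = {{u, v} | u v. u < n \<and> v < n \<and> u \<noteq> v}"

definition two_coloring :: "nat \<Rightarrow> (nat set \<Rightarrow> nat) \<Rightarrow> bool" where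
  "two_coloring n c \<longleftrightarrow> (\<forall>e \<in> Kedges n. c e \<in> {1, 2})"

definition embedding :: "nat \<Rightarrow> (nat set \<Rightarrow> nat) \<Rightarrow> nat \<Rightarrow> graph \<Rightarrow> (nat \<Rightarrow> nat) \<Rightarrow> bool" where
  "embedding n c j H \<phi> \<longleftrightarrow>
     inj_on \<phi> {0..<order H} \<and> \<phi> ` {0..<order H} \<subseteq> {0..<n} \<and>
     (\<forall>e \<in> edges H. c (\<phi> ` e) = j)"

definition cyc_increasing :: "graph \<Rightarrow> (nat \<Rightarrow> nat) \<Rightarrow> bool" where
  "cyc_increasing H \<phi> \<longleftrightarrow>
     (\<exists>t < order H. \<forall>i j. i < j \<and> j < order H \<longrightarrow>
        \<phi> ((t + i) mod order H) < \<phi> ((t + j) mod order H))"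

definition cyc_arrows :: "nat \<Rightarrow> graph \<Rightarrow> graph \<Rightarrow> bool" where
  "cyc_arrows n H1 H2 \<longleftrightarrow>
     (\<forall>c. two_coloring n c \<longrightarrow>
        (\<exists>\<phi>. embedding n c 1 H1 \<phi> \<and> cyc_increasing H1 \<phi>) \<or>
        (\<exists>\<phi>. embedding n c 2 H2 \<phi> \<and> cyc_increasing H2 \<phi>))"

definition R_cyc :: "graph \<Rightarrow> graph \<Rightarrow> nat" where
  "R_cyc H1 H2 = (LEAST n. cyc_arrows n H1 H2)"

end

theory Submission
  imports Defs
begin

(*
  A cyclically increasing copy of C_k^mon in colour j is the same as an increasing sequence
  y 0 < ... < y (k - 1) whose consecutive pairs and closing pair {y 0, y (k - 1)} have colour j.

  Upper bound: in a colouring of n = (a-1)(b-1) + (a-2)(b-2) + 1 vertices without red a-cycle and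
  blue b-cycle, the red neighbours of vertex 0 contain no red increasing path on a-1 vertices (it
  would close up through 0) and no blue b-clique, so there are at most (a-2)(b-1) of them; likewise
  at most (b-2)(a-1) blue neighbours, and (a-2)(b-1) + (b-2)(a-1) < n - 1.

  Lower bound: arrange (a-1)(b-1) vertices as a (b-1) x (a-1) grid followed by the remaining
  (a-2)(b-2) as a (b-2) x (a-2) grid, each filled row by row. Inside a grid an edge is red iff it
  goes to a later column, so red increasing paths move right and blue ones move down: a red path
  has at most a-1 vertices in the first grid and a-2 in the second, a blue one at most b-1 and b-2.
  A monochromatic cycle of the forbidden length must therefore use both grids, and the edges between
  the grids are coloured so that its crossing edge and its closing edge cannot both have its colour.
*)

section \<open>Monotone cycles\<close>

definition mono_path :: "(nat set \<Rightarrow> 'c) \<Rightarrow> 'c \<Rightarrow> nat set \<Rightarrow> nat \<Rightarrow> (nat \<Rightarrow> nat) \<Rightarrow> bool" where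
  "mono_path c j X k y \<longleftrightarrow>
     (\<forall>i<k. y i \<in> X) \<and> (\<forall>i. Suc i < k \<longrightarrow> y i < y (Suc i) \<and> c {y i, y (Suc i)} = j)"

definition mono_cycle :: "nat \<Rightarrow> (nat set \<Rightarrow> 'c) \<Rightarrow> 'c \<Rightarrow> nat \<Rightarrow> bool" where
  "mono_cycle n c j k \<longleftrightarrow> (\<exists>y. mono_path c j {..<n} k y \<and> c {y 0, y (k - 1)} = j)"

definition monochromatic :: "(nat set \<Rightarrow> 'c) \<Rightarrow> 'c \<Rightarrow> nat set \<Rightarrow> bool" where
  "monochromatic c j S \<longleftrightarrow> (\<forall>u\<in>S. \<forall>v\<in>S. u \<noteq> v \<longrightarrow> c {u, v} = j)"

lemma mono_path_less:
  assumes "mono_path c j X k y" "i < i'" "i' < k"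
  shows "y i < y i'"
proof -
  have "y n < y (Suc n)" if "n \<in> {..<k - 1}" for n
    using assms(1) that unfolding mono_path_def by auto
  moreover have "{i..<i'} \<subseteq> {..<k - 1}" using assms(3) by auto
  ultimately show ?thesis using lift_Suc_mono_less_ivl assms(2) by blast
qed

lemma mono_path_subset: "mono_path c j X k y \<Longrightarrow> X \<subseteq> Y \<Longrightarrow> mono_path c j Y k y"
  unfolding mono_path_def by blast

lemma mono_path_prepend:
  assumes "mono_path c j X k y" "u \<in> X" "0 < k" "u < y 0" "c {u, y 0} = j"
  shows "mono_path c j X (Suc k) (case_nat u y)"
  using assms unfolding mono_path_def by (auto simp: less_Suc_eq_0_disj split: nat.split)

lemma mono_cycle_mono:
  assumes "mono_cycle n c j k" "n \<le> m"
  shows "mono_cycle m c j k"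
proof -
  obtain y where "mono_path c j {..<n} k y" "c {y 0, y (k - 1)} = j"
    using assms(1) unfolding mono_cycle_def by blast
  moreover have "{..<n} \<subseteq> {..<m}" using assms(2) by auto
  ultimately show ?thesis unfolding mono_cycle_def by (blast intro: mono_path_subset)
qed

lemma order_C_mon [simp]: "order (C_mon k) = k"
  by (simp add: C_mon_def order_def)

lemma edges_C_mon:
  assumes "k \<ge> 2"
  shows "edges (C_mon k) = {{i, i + 1} | i. i + 2 \<le> k} \<union> {{0, k - 1}}"
proof (cases "k = 2")
  case True
  have "{{i, i + 1} | i::nat. i + 2 \<le> 2} = {{0, 1}}" by auto
  then show ?thesis using True by (simp add: C_mon_def edges_def)
qed (simp add: C_mon_def edges_def)

lemma mod_Suc_edge_C_mon:
  assumes "k \<ge> 2"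
  shows "{i mod k, Suc i mod k} \<in> edges (C_mon k)"
proof (cases "Suc (i mod k) = k")
  case True
  then have "Suc i mod k = 0" by (simp add: mod_Suc)
  with True show ?thesis using assms by (auto simp: edges_C_mon)
next
  case False
  then have "Suc i mod k = i mod k + 1" "i mod k + 2 \<le> k"
    using assms by (auto simp: mod_Suc Suc_le_eq order_le_neq_trans)
  then show ?thesis using assms by (auto simp: edges_C_mon)
qed

lemma mono_cycle_if_cyc_embedding:
  assumes k: "k \<ge> 2" and "embedding n c j (C_mon k) \<phi>" "cyc_increasing (C_mon k) \<phi>"
  shows "mono_cycle n c j k"
proof -
  obtain t where t: "t < k"
    and inc: "\<forall>i i'. i < i' \<and> i' < k \<longrightarrow> \<phi> ((t + i) mod k) < \<phi> ((t + i') mod k)"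
    using assms(3) unfolding cyc_increasing_def order_C_mon by blast
  have range: "\<phi> ` {0..<k} \<subseteq> {0..<n}" and edge: "\<forall>e \<in> edges (C_mon k). c (\<phi> ` e) = j"
    using assms(2) unfolding embedding_def order_C_mon by auto
  define y where "y i = \<phi> ((t + i) mod k)" for i
  have edge_y: "c {y i, y (Suc i)} = j" for i
  proof -
    have "c (\<phi> ` {(t + i) mod k, Suc (t + i) mod k}) = j"
      using edge mod_Suc_edge_C_mon[OF k, of "t + i"] by blast
    then show ?thesis by (simp add: y_def)
  qed
  have "y i < n" for i
    using range k by (simp add: image_subset_iff y_def)
  moreover have "y i < y (Suc i)" if "Suc i < k" for i
    using inc[rule_format, of i "Suc i"] that unfolding y_def by simp
  ultimately have "mono_path c j {..<n} k y"
    unfolding mono_path_def using edge_y by simp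
  moreover have "y (Suc (k - 1)) = y 0"
    using k t by (simp add: y_def)
  then have "c {y 0, y (k - 1)} = j"
    using edge_y[of "k - 1"] by (simp add: insert_commute)
  ultimately show ?thesis
    unfolding mono_cycle_def by blast
qed

lemma cyc_embedding_if_mono_cycle:
  assumes k: "k \<ge> 2" and "mono_cycle n c j k"
  shows "\<exists>\<phi>. embedding n c j (C_mon k) \<phi> \<and> cyc_increasing (C_mon k) \<phi>"
proof -
  obtain y where path: "mono_path c j {..<n} k y" and closing: "c {y 0, y (k - 1)} = j"
    using assms(2) unfolding mono_cycle_def by blast
  have "inj_on y {0..<k}"
  proof (rule inj_onI)
    fix u v assume "u \<in> {0..<k}" "v \<in> {0..<k}" "y u = y v"
    then show "u = v"
      using mono_path_less[OF path, of u v] mono_path_less[OF path, of v u]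
      by (cases u v rule: linorder_cases) auto
  qed
  moreover have "y ` {0..<k} \<subseteq> {0..<n}"
    using path unfolding mono_path_def by auto
  moreover have "c (y ` e) = j" if "e \<in> edges (C_mon k)" for e
  proof -
    from that consider i where "e = {i, i + 1}" "i + 2 \<le> k" | "e = {0, k - 1}"
      unfolding edges_C_mon[OF k] by blast
    then show ?thesis
      using path closing unfolding mono_path_def by cases simp_all
  qed
  moreover have "cyc_increasing (C_mon k) y"
    unfolding cyc_increasing_def using k mono_path_less[OF path] by (intro exI[of _ 0]) simp
  ultimately show ?thesis
    unfolding embedding_def order_C_mon by blast
qed

lemma cyc_embedding_C_mon_iff_mono_cycle:
  assumes "k \<ge> 2"
  shows "(\<exists>\<phi>. embedding n c j (C_mon k) \<phi> \<and> cyc_increasing (C_mon k) \<phi>) \<longleftrightarrow> mono_cycle n c j k"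
  using mono_cycle_if_cyc_embedding[OF assms] cyc_embedding_if_mono_cycle[OF assms] by blast

lemma cyc_arrows_C_mon_iff:
  assumes "a \<ge> 2" "b \<ge> 2"
  shows "cyc_arrows n (C_mon a) (C_mon b) \<longleftrightarrow>
    (\<forall>c. two_coloring n c \<longrightarrow> mono_cycle n c 1 a \<or> mono_cycle n c 2 b)"
  unfolding cyc_arrows_def cyc_embedding_C_mon_iff_mono_cycle[OF assms(1)]
    cyc_embedding_C_mon_iff_mono_cycle[OF assms(2)] ..

section \<open>Upper bound\<close>

(* The vertices of X without a j-edge from a smaller vertex of X form a j'-clique, and every j-path
   in the remaining vertices extends to the left by one vertex of X. *)
lemma card_le_if_no_mono_path_no_clique:
  assumes "finite X"
    and "\<And>u v. u \<in> X \<Longrightarrow> v \<in> X \<Longrightarrow> u \<noteq> v \<Longrightarrow> c {u, v} \<noteq> j \<Longrightarrow> c {u, v} = j'"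
    and "\<not> (\<exists>y. mono_path c j X (Suc p) y)"
    and "\<And>S. S \<subseteq> X \<Longrightarrow> monochromatic c j' S \<Longrightarrow> card S < q"
  shows "card X \<le> p * (q - 1)"
  using assms
proof (induction p arbitrary: X)
  case 0
  have "X = {}"
  proof (rule ccontr)
    assume "X \<noteq> {}"
    then obtain x where "x \<in> X" by blast
    then have "mono_path c j X (Suc 0) (\<lambda>_. x)" by (simp add: mono_path_def)
    with "0.prems"(3) show False by blast
  qed
  then show ?case by simp
next
  case (Suc p)
  define sources where "sources = {v \<in> X. \<forall>u\<in>X. u < v \<longrightarrow> c {u, v} \<noteq> j}"
  have sources_X: "sources \<subseteq> X" by (auto simp: sources_def)
  have "monochromatic c j' sources"
    unfolding monochromatic_def
  proof (intro ballI impI)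
    fix u v assume uv: "u \<in> sources" "v \<in> sources" "u \<noteq> v"
    then have "c {u, v} \<noteq> j"
      unfolding sources_def by (cases u v rule: linorder_cases) (auto simp: insert_commute)
    then show "c {u, v} = j'" using Suc.prems(2) uv sources_X by blast
  qed
  then have card_sources: "card sources < q" using Suc.prems(4) sources_X by blast
  have "\<not> (\<exists>y. mono_path c j (X - sources) (Suc p) y)"
  proof
    assume "\<exists>y. mono_path c j (X - sources) (Suc p) y"
    then obtain y where y: "mono_path c j (X - sources) (Suc p) y" by blast
    then have "y 0 \<in> X - sources" by (simp add: mono_path_def)
    then obtain u where "u \<in> X" "u < y 0" "c {u, y 0} = j" unfolding sources_def by blast
    moreover have "mono_path c j X (Suc p) y" using y by (rule mono_path_subset) blast
    ultimately have "mono_path c j X (Suc (Suc p)) (case_nat u y)"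
      by (intro mono_path_prepend) auto
    with Suc.prems(3) show False by blast
  qed
  with Suc.prems have "card (X - sources) \<le> p * (q - 1)"
    by (intro Suc.IH) blast+
  moreover have "card (X - sources) = card X - card sources" "card sources \<le> card X"
    using Suc.prems(1) sources_X by (auto intro: card_Diff_subset card_mono finite_subset)
  ultimately show ?case using card_sources by simp
qed

lemma mono_cycle_if_clique:
  assumes "finite S" "S \<subseteq> {..<n}" "monochromatic c j S" "2 \<le> k" "k \<le> card S"
  shows "mono_cycle n c j k"
proof -
  define xs where "xs = sorted_list_of_set S"
  have sorted: "sorted_wrt (<) xs" and set_xs: "set xs = S" and length_xs: "length xs = card S"
    using assms(1) by (simp_all add: xs_def)
  have in_S: "xs ! i \<in> S" if "i < k" for i
    using that assms(5) set_xs length_xs nth_mem by fastforce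
  have less: "xs ! i < xs ! i'" if "i < i'" "i' < k" for i i'
    using sorted_wrt_nth_less[OF sorted that(1)] that assms(5) length_xs by simp
  have edge: "c {xs ! i, xs ! i'} = j" if "i < i'" "i' < k" for i i'
    using assms(3) in_S[of i] in_S[of i'] less[OF that] that unfolding monochromatic_def by auto
  have "xs ! i < n" if "i < k" for i
    using in_S[OF that] assms(2) by auto
  then have "mono_path c j {..<n} k ((!) xs)"
    unfolding mono_path_def using less edge by auto
  moreover have "c {xs ! 0, xs ! (k - 1)} = j"
    using edge assms(4) by simp
  ultimately show ?thesis unfolding mono_cycle_def by blast
qed

lemma mono_cycle_if_path_in_neighbourhood:
  assumes "mono_path c j {v. w < v \<and> v < n \<and> c {w, v} = j} p y" "0 < p"
  shows "mono_cycle n c j (Suc p)"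
proof -
  have y0: "w < y 0" "y 0 < n" "c {w, y 0} = j" and last: "c {w, y (p - 1)} = j"
    using assms unfolding mono_path_def by auto
  have "mono_path c j {..<n} p y"
    using assms(1) by (rule mono_path_subset) auto
  then have "mono_path c j {..<n} (Suc p) (case_nat w y)"
    using y0 assms(2) by (intro mono_path_prepend) auto
  moreover have "c {case_nat w y 0, case_nat w y (Suc p - 1)} = j"
    using last assms(2) by (cases p) auto
  ultimately show ?thesis unfolding mono_cycle_def by blast
qed

lemma card_neighbourhood_le:
  assumes "\<And>u v. u < n \<Longrightarrow> v < n \<Longrightarrow> u \<noteq> v \<Longrightarrow> c {u, v} \<noteq> j \<Longrightarrow> c {u, v} = j'"
    and "\<not> mono_cycle n c j (Suc (Suc p))" "\<not> mono_cycle n c j' q" "2 \<le> q"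
  shows "card {v. w < v \<and> v < n \<and> c {w, v} = j} \<le> p * (q - 1)"
proof (rule card_le_if_no_mono_path_no_clique)
  let ?N = "{v. w < v \<and> v < n \<and> c {w, v} = j}"
  show "finite ?N" by simp
  show "\<And>u v. u \<in> ?N \<Longrightarrow> v \<in> ?N \<Longrightarrow> u \<noteq> v \<Longrightarrow> c {u, v} \<noteq> j \<Longrightarrow> c {u, v} = j'"
    using assms(1) by blast
  show "\<not> (\<exists>y. mono_path c j ?N (Suc p) y)"
    using assms(2) mono_cycle_if_path_in_neighbourhood[of c j w n "Suc p"] by auto
  show "card S < q" if "S \<subseteq> ?N" "monochromatic c j' S" for S
  proof (rule ccontr)
    assume "\<not> card S < q"
    moreover have "S \<subseteq> {..<n}" using that(1) by auto
    moreover have "finite S" using calculation(2) finite_subset by blast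
    ultimately have "mono_cycle n c j' q"
      using that(2) assms(4) by (intro mono_cycle_if_clique[of S]) auto
    with assms(3) show False by blast
  qed
qed

lemma cyc_arrows_C_mon_upper:
  assumes a: "a \<ge> 2" and b: "b \<ge> 2"
  shows "cyc_arrows ((a - 1) * (b - 1) + (a - 2) * (b - 2) + 1) (C_mon a) (C_mon b)"
proof -
  define n where "n = (a - 1) * (b - 1) + (a - 2) * (b - 2) + 1"
  have "mono_cycle n c 1 a \<or> mono_cycle n c 2 b" if "two_coloring n c" for c
  proof (rule ccontr)
    assume no_cycle: "\<not> (mono_cycle n c 1 a \<or> mono_cycle n c 2 b)"
    have colour: "c {u, v} = 1 \<or> c {u, v} = 2" if "u < n" "v < n" "u \<noteq> v" for u v
      using \<open>two_coloring n c\<close> that unfolding two_coloring_def Kedges_def by blast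
    let ?red = "{v. 0 < v \<and> v < n \<and> c {0, v} = 1}" and ?blue = "{v. 0 < v \<and> v < n \<and> c {0, v} = 2}"
    have red_bound: "card ?red \<le> (a - 2) * (b - 1)"
    proof (rule card_neighbourhood_le[where j' = 2])
      have "Suc (Suc (a - 2)) = a" using a by arith
      then show "\<not> mono_cycle n c 1 (Suc (Suc (a - 2)))" using no_cycle by simp
    qed (use no_cycle colour b in auto)
    have blue_bound: "card ?blue \<le> (b - 2) * (a - 1)"
    proof (rule card_neighbourhood_le[where j' = 1])
      have "Suc (Suc (b - 2)) = b" using b by arith
      then show "\<not> mono_cycle n c 2 (Suc (Suc (b - 2)))" using no_cycle by simp
    qed (use no_cycle colour a in auto)
    have cover: "{0<..<n} \<subseteq> ?red \<union> ?blue"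
    proof
      fix v assume "v \<in> {0<..<n}"
      then show "v \<in> ?red \<union> ?blue" using colour[of 0 v] by auto
    qed
    have "n - 1 = card {0<..<n}" by simp
    also have "\<dots> \<le> card (?red \<union> ?blue)" using cover by (intro card_mono) auto
    also have "\<dots> \<le> card ?red + card ?blue" by (rule card_Un_le)
    also have "\<dots> \<le> (a - 2) * (b - 1) + (b - 2) * (a - 1)"
      using red_bound blue_bound by (rule add_mono)
    finally have "n - 1 \<le> (a - 2) * (b - 1) + (b - 2) * (a - 1)" .
    moreover obtain a' b' where "a = a' + 2" "b = b' + 2"
      using a b by (metis add.commute le_Suc_ex)
    ultimately show False unfolding n_def by (simp add: algebra_simps)
  qed
  then show ?thesis unfolding n_def[symmetric] cyc_arrows_C_mon_iff[OF a b] by blast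
qed

section \<open>Lower bound\<close>

lemma rise_along_steps:
  fixes p :: "nat \<Rightarrow> nat" and s :: "nat \<Rightarrow> 'a::preorder"
  assumes "i \<le> j" "\<And>n. i \<le> n \<Longrightarrow> n < j \<Longrightarrow> p n < p (Suc n) \<and> s n \<le> s (Suc n)"
  shows "p i + (j - i) \<le> p j \<and> s i \<le> s j"
  using assms(1)
proof (induction j rule: dec_induct)
  case (step n)
  then show ?case using assms(2)[of n] order_trans by (fastforce simp: Suc_diff_le)
qed simp

(* Positions 0..K of an increasing monochromatic cycle in the extremal colouring below: late i says
   that the i-th vertex lies in the second grid, p is the coordinate that grows along every edge
   inside a grid, and s is the other coordinate. *)
lemma two_block_potential_False:
  fixes p :: "nat \<Rightarrow> nat" and s :: "nat \<Rightarrow> int" and late :: "nat \<Rightarrow> bool"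
    and P :: "int \<Rightarrow> int \<Rightarrow> bool"
  assumes late_mono: "\<And>i j. i \<le> j \<Longrightarrow> j \<le> K \<Longrightarrow> late i \<Longrightarrow> late j"
    and early_bound: "\<And>i. i \<le> K \<Longrightarrow> \<not> late i \<Longrightarrow> p i < K"
    and late_bound: "\<And>i. i \<le> K \<Longrightarrow> late i \<Longrightarrow> Suc (p i) < K"
    and step: "\<And>i. i < K \<Longrightarrow> late i = late (Suc i) \<Longrightarrow> p i < p (Suc i) \<and> s i \<le> s (Suc i)"
    and cross: "\<And>i. i < K \<Longrightarrow> \<not> late i \<Longrightarrow> late (Suc i) \<Longrightarrow> p (Suc i) < p i \<Longrightarrow> P (s i) (s (Suc i))"
    and closing: "\<not> late 0 \<Longrightarrow> late K \<Longrightarrow> P (s 0) (s K) \<Longrightarrow> p K < p 0"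
    and P_mono: "\<And>w x y z. w \<le> x \<Longrightarrow> P x y \<Longrightarrow> y \<le> z \<Longrightarrow> P w z"
  shows False
proof -
  have run: "p i + (j - i) \<le> p j \<and> s i \<le> s j"
    if "i \<le> j" "j \<le> K" "\<And>n. i \<le> n \<Longrightarrow> n < j \<Longrightarrow> late n = late (Suc n)" for i j
    using that(1) by (rule rise_along_steps) (use that step in auto)
  have "p K < K" using early_bound[of K] late_bound[of K] by fastforce
  consider (one_block) "late 0 = late K" | (switches) "\<not> late 0" "late K"
    using late_mono[of 0 K] by blast
  then show False
  proof cases
    case one_block
    then have "late n = late 0" if "n \<le> K" for n
      using late_mono[of 0 n] late_mono[of n K] that by (cases "late 0") auto
    then have "late n = late (Suc n)" if "n < K" for n
      using that by (metis Suc_leI less_imp_le)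
    then have "p 0 + K \<le> p K" using run[of 0 K, simplified] by blast
    with \<open>p K < K\<close> show False by simp
  next
    case switches
    then obtain k where k: "k < K" "\<forall>i\<le>k. \<not> late i" "late (Suc k)"
      using ex_least_nat_less[of late K] by blast
    have "late i" if "Suc k \<le> i" "i \<le> K" for i
      using late_mono[OF that] k(3) by blast
    then have first_run: "p 0 + k \<le> p k \<and> s 0 \<le> s k"
      and second_run: "p (Suc k) + (K - Suc k) \<le> p K \<and> s (Suc k) \<le> s K"
      using run[of 0 k] run[of "Suc k" K] k by auto
    have bounds: "p k < K" "Suc (p K) < K"
      using early_bound[of k] late_bound[of K] k switches by auto
    show False
    proof (cases "p (Suc k) < p k")
      case True
      then have "P (s k) (s (Suc k))" using cross[of k] k by simp
      then have "P (s 0) (s K)" using P_mono first_run second_run by blast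
      then have "p K < p 0" using closing switches by blast
      then show False using first_run second_run bounds True k(1) by linarith
    next
      case False
      then show False using first_run second_run bounds k(1) by linarith
    qed
  qed
qed

lemma div_mod_lex_less:
  fixes x y d :: nat
  assumes "x < y"
  shows "x div d < y div d \<or> x div d = y div d \<and> x mod d < y mod d"
proof (cases "x div d = y div d")
  case True
  then show ?thesis using assms by (metis div_mult_mod_eq nat_add_left_cancel_less)
next
  case False
  then show ?thesis using div_le_mono[of x y d] assms by simp
qed

context
  fixes a b :: nat
  assumes a: "2 \<le> a" and b: "2 \<le> b"
begin

abbreviation first_grid_size :: nat where
  "first_grid_size \<equiv> (a - 1) * (b - 1)"

abbreviation extremal_order :: nat where
  "extremal_order \<equiv> first_grid_size + (a - 2) * (b - 2)"

definition grid_row :: "nat \<Rightarrow> nat" where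
  "grid_row v = (if v < first_grid_size then v div (a - 1) else (v - first_grid_size) div (a - 2))"

definition grid_col :: "nat \<Rightarrow> nat" where
  "grid_col v = (if v < first_grid_size then v mod (a - 1) else (v - first_grid_size) mod (a - 2))"

definition extremal_red :: "nat \<Rightarrow> nat \<Rightarrow> bool" where
  "extremal_red u v \<longleftrightarrow>
     (if (u < first_grid_size) = (v < first_grid_size) then grid_col u < grid_col v
      else (grid_row u \<le> grid_row v \<longleftrightarrow> grid_col v < grid_col u))"

definition extremal_coloring :: "nat set \<Rightarrow> nat" where
  "extremal_coloring e = (if extremal_red (Min e) (Max e) then 1 else 2)"

lemma first_grid_bounds:
  assumes "v < first_grid_size"
  shows "grid_row v < b - 1" "grid_col v < a - 1"
  using assms a by (simp_all add: grid_row_def grid_col_def less_mult_imp_div_less mult.commute)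

lemma second_grid_bounds:
  assumes "first_grid_size \<le> v" "v < extremal_order"
  shows "grid_row v < b - 2" "grid_col v < a - 2"
proof -
  have "v - first_grid_size < (a - 2) * (b - 2)" using assms by linarith
  moreover from this have "0 < a - 2" by (cases "a - 2") auto
  ultimately show "grid_row v < b - 2" "grid_col v < a - 2"
    using assms(1) by (simp_all add: grid_row_def grid_col_def less_mult_imp_div_less mult.commute)
qed

lemma grid_lex_less:
  assumes "u < v" "(u < first_grid_size) = (v < first_grid_size)"
  shows "grid_row u < grid_row v \<or> grid_row u = grid_row v \<and> grid_col u < grid_col v"
proof (cases "v < first_grid_size")
  case True
  then show ?thesis
    using assms div_mod_lex_less[of u v "a - 1"] by (simp add: grid_row_def grid_col_def)
next
  case False
  then have "u - first_grid_size < v - first_grid_size" using assms by simp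
  then show ?thesis
    using assms False div_mod_lex_less[of "u - first_grid_size" "v - first_grid_size" "a - 2"]
    by (simp add: grid_row_def grid_col_def)
qed

lemma red_in_grid:
  assumes "u < v" "(u < first_grid_size) = (v < first_grid_size)" "extremal_red u v"
  shows "grid_col u < grid_col v" "grid_row u \<le> grid_row v"
  using assms grid_lex_less[OF assms(1,2)] unfolding extremal_red_def by auto

lemma blue_in_grid:
  assumes "u < v" "(u < first_grid_size) = (v < first_grid_size)" "\<not> extremal_red u v"
  shows "grid_row u < grid_row v" "grid_col v \<le> grid_col u"
  using assms grid_lex_less[OF assms(1,2)] unfolding extremal_red_def by auto

lemma extremal_coloring_pair:
  "u < v \<Longrightarrow> extremal_coloring {u, v} = (if extremal_red u v then 1 else 2)"
  unfolding extremal_coloring_def by (simp add: min_def max_def)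

lemma two_coloring_extremal_coloring: "two_coloring n extremal_coloring"
  unfolding two_coloring_def extremal_coloring_def by simp

lemma mono_cycle_extremal_coloringE:
  assumes "mono_cycle n extremal_coloring j k" "2 \<le> k"
  obtains y where "\<And>i i'. i < i' \<Longrightarrow> i' \<le> k - 1 \<Longrightarrow> y i < y i'" "\<And>i. i \<le> k - 1 \<Longrightarrow> y i < n"
    "\<And>i. i < k - 1 \<Longrightarrow> extremal_red (y i) (y (Suc i)) \<longleftrightarrow> j = 1"
    "extremal_red (y 0) (y (k - 1)) \<longleftrightarrow> j = 1"
proof -
  obtain y where path: "mono_path extremal_coloring j {..<n} k y"
    and closing: "extremal_coloring {y 0, y (k - 1)} = j"
    using assms(1) unfolding mono_cycle_def by blast
  have less: "y i < y i'" if "i < i'" "i' \<le> k - 1" for i i'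
    using mono_path_less[OF path that(1)] that(2) assms(2) by simp
  show thesis
  proof (rule that[OF less])
    show "y i < n" if "i \<le> k - 1" for i using path that assms(2) unfolding mono_path_def by auto
    show "extremal_red (y i) (y (Suc i)) \<longleftrightarrow> j = 1" if "i < k - 1" for i
      using path that extremal_coloring_pair[of "y i" "y (Suc i)"] unfolding mono_path_def
      by (auto split: if_splits)
    show "extremal_red (y 0) (y (k - 1)) \<longleftrightarrow> j = 1"
      using closing less[of 0 "k - 1"] assms(2) extremal_coloring_pair[of "y 0" "y (k - 1)"]
      by (auto split: if_splits)
  qed
qed

lemma no_red_cycle: "\<not> mono_cycle extremal_order extremal_coloring 1 a"
proof
  assume "mono_cycle extremal_order extremal_coloring 1 a"
  then obtain y where less: "\<And>i i'. i < i' \<Longrightarrow> i' \<le> a - 1 \<Longrightarrow> y i < y i'"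
    and range: "\<And>i. i \<le> a - 1 \<Longrightarrow> y i < extremal_order"
    and steps: "\<And>i. i < a - 1 \<Longrightarrow> extremal_red (y i) (y (Suc i))"
    and closing: "extremal_red (y 0) (y (a - 1))"
    by (rule mono_cycle_extremal_coloringE[OF _ a]) auto
  show False
  proof (rule two_block_potential_False[where K = "a - 1" and late = "\<lambda>i. first_grid_size \<le> y i"
        and p = "\<lambda>i. grid_col (y i)" and s = "\<lambda>i. int (grid_row (y i))" and P = "(\<le>)"])
    show "first_grid_size \<le> y j" if "i \<le> j" "j \<le> a - 1" "first_grid_size \<le> y i" for i j
      using that less[of i j] by (cases "i = j") auto
    show "grid_col (y i) < a - 1" if "i \<le> a - 1" "\<not> first_grid_size \<le> y i" for i
      using that first_grid_bounds by simp
    show "Suc (grid_col (y i)) < a - 1" if "i \<le> a - 1" "first_grid_size \<le> y i" for i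
      using that second_grid_bounds range[of i] by fastforce
    show "grid_col (y i) < grid_col (y (Suc i)) \<and>
        int (grid_row (y i)) \<le> int (grid_row (y (Suc i)))"
      if "i < a - 1" "(first_grid_size \<le> y i) = (first_grid_size \<le> y (Suc i))" for i
      using that red_in_grid[OF less[of i "Suc i"] _ steps[of i]] by auto
    show "int (grid_row (y i)) \<le> int (grid_row (y (Suc i)))"
      if "i < a - 1" "\<not> first_grid_size \<le> y i" "first_grid_size \<le> y (Suc i)"
        "grid_col (y (Suc i)) < grid_col (y i)" for i
      using that steps[of i] unfolding extremal_red_def by auto
    show "grid_col (y (a - 1)) < grid_col (y 0)"
      if "\<not> first_grid_size \<le> y 0" "first_grid_size \<le> y (a - 1)"
        "int (grid_row (y 0)) \<le> int (grid_row (y (a - 1)))"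
      using that closing unfolding extremal_red_def by auto
  qed auto
qed

lemma no_blue_cycle: "\<not> mono_cycle extremal_order extremal_coloring 2 b"
proof
  assume "mono_cycle extremal_order extremal_coloring 2 b"
  then obtain y where less: "\<And>i i'. i < i' \<Longrightarrow> i' \<le> b - 1 \<Longrightarrow> y i < y i'"
    and range: "\<And>i. i \<le> b - 1 \<Longrightarrow> y i < extremal_order"
    and steps: "\<And>i. i < b - 1 \<Longrightarrow> \<not> extremal_red (y i) (y (Suc i))"
    and closing: "\<not> extremal_red (y 0) (y (b - 1))"
    by (rule mono_cycle_extremal_coloringE[OF _ b]) auto
  show False
  proof (rule two_block_potential_False[where K = "b - 1" and late = "\<lambda>i. first_grid_size \<le> y i"
        and p = "\<lambda>i. grid_row (y i)" and s = "\<lambda>i. - int (grid_col (y i))" and P = "(<)"])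
    show "first_grid_size \<le> y j" if "i \<le> j" "j \<le> b - 1" "first_grid_size \<le> y i" for i j
      using that less[of i j] by (cases "i = j") auto
    show "grid_row (y i) < b - 1" if "i \<le> b - 1" "\<not> first_grid_size \<le> y i" for i
      using that first_grid_bounds by simp
    show "Suc (grid_row (y i)) < b - 1" if "i \<le> b - 1" "first_grid_size \<le> y i" for i
      using that second_grid_bounds range[of i] by fastforce
    show "grid_row (y i) < grid_row (y (Suc i)) \<and>
        - int (grid_col (y i)) \<le> - int (grid_col (y (Suc i)))"
      if "i < b - 1" "(first_grid_size \<le> y i) = (first_grid_size \<le> y (Suc i))" for i
      using that blue_in_grid[OF less[of i "Suc i"] _ steps[of i]] by auto
    show "- int (grid_col (y i)) < - int (grid_col (y (Suc i)))"
      if "i < b - 1" "\<not> first_grid_size \<le> y i" "first_grid_size \<le> y (Suc i)"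
        "grid_row (y (Suc i)) < grid_row (y i)" for i
      using that steps[of i] unfolding extremal_red_def by auto
    show "grid_row (y (b - 1)) < grid_row (y 0)"
      if "\<not> first_grid_size \<le> y 0" "first_grid_size \<le> y (b - 1)"
        "- int (grid_col (y 0)) < - int (grid_col (y (b - 1)))"
      using that closing unfolding extremal_red_def by auto
  qed auto
qed

lemma not_cyc_arrows_extremal:
  assumes "n \<le> extremal_order"
  shows "\<not> cyc_arrows n (C_mon a) (C_mon b)"
proof
  assume "cyc_arrows n (C_mon a) (C_mon b)"
  then have "mono_cycle n extremal_coloring 1 a \<or> mono_cycle n extremal_coloring 2 b"
    using cyc_arrows_C_mon_iff[OF a b] two_coloring_extremal_coloring by blast
  then show False
    using no_red_cycle no_blue_cycle mono_cycle_mono assms by meson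
qed

end

theorem corollary4p11:
  fixes a b :: nat
  assumes "a \<ge> 2" and "b \<ge> 2"
  shows "int (R_cyc (C_mon a) (C_mon b)) = 2 * int a * int b - 3 * int a - 3 * int b + 6"
proof -
  define n where "n = (a - 1) * (b - 1) + (a - 2) * (b - 2)"
  have "R_cyc (C_mon a) (C_mon b) = n + 1"
    unfolding R_cyc_def
  proof (rule Least_equality)
    show "cyc_arrows (n + 1) (C_mon a) (C_mon b)"
      using cyc_arrows_C_mon_upper[OF assms] by (simp add: n_def)
    show "n + 1 \<le> m" if "cyc_arrows m (C_mon a) (C_mon b)" for m
      using not_cyc_arrows_extremal[OF assms, of m] that by (force simp: n_def)
  qed
  moreover obtain a' b' where "a = a' + 2" "b = b' + 2"
    using assms by (metis add.commute le_Suc_ex)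
  ultimately show ?thesis by (simp add: n_def algebra_simps)
qed

end
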